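(* Let $\Sigma=(X,\mathcal{U},\phi)$ be an ordered control system which is monotone with respect to inputs and satisfies $\mathcal{U}(x)=\mathcal{U}$ for all $x\in X$. Let $\mathcal{U}_c\subseteq\mathcal{U}$, and assume: (i) there exists $\rho\in\mathcal{K}_\infty$ such that for all $x_-,x,x_+\in X$ with $x_-\le x\le x_+$ one has $\|x\|_X\le\rho(\|x_-\|_X+\|x_+\|_X)$; (ii) there exists $\eta\in\mathcal{K}_\infty$ such that for every $u\in\mathcal{U}$ there exist $u_-,u_+\in\mathcal{U}_c$ with $u_-\le u\le u_+$, $\|u_-\|_{\mathcal{U}}\le\eta(\|u\|_{\mathcal{U}})$ and $\|u_+\|_{\mathcal{U}}\le\eta(\|u\|_{\mathcal{U}})$. Then $\Sigma$ is ISS if and only if $\Sigma$ is ISS with respect to inputs in $\mathcal{U}_c$. Moreover, if $\rho$ is linear, then $\Sigma$ is exp-ISS if and only if $\Sigma$ is exp-ISS with respect to inputs in $\mathcal{U}_c$; and if in addition $\Sigma$ is exp-ISS with respect to inputs in $\mathcal{U}_c$ with a linear gain function and $\eta$ is linear, then $\Sigma$ is exp-ISS with a linear gain function.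
   Context: Comparison functions: $\mathcal{K}$ is the set of continuous strictly increasing $\gamma:\mathbb{R}_+\to\mathbb{R}_+$ with $\gamma(0)=0$; $\mathcal{K}_\infty$ the unbounded functions in $\mathcal{K}$; $\mathcal{L}$ the continuous decreasing $\gamma:\mathbb{R}_+\to\mathbb{R}_+$ with $\gamma(t)\to0$; $\mathcal{KL}$ the functions $\beta:\mathbb{R}_+^2\to\mathbb{R}_+$ with $\beta(\cdot,t)\in\mathcal{K}$ for all $t\ge0$ and $\beta(r,\cdot)\in\mathcal{L}$ for all $r>0$. A control system $\Sigma=(X,\mathcal{U},\phi)$ consists of a normed linear space $X$ (state space), a set $U$ of input values (nonempty subset of a normed linear space), a normed linear space $\mathcal{U}$ of functions $\mathbb{R}_+\to U$ closed under time shifts $u\mapsto u(\cdot+\tau)$, nonempty sets $\mathcal{U}(x)\subseteq\mathcal{U}$ of admissible inputs for each $x\in X$, and a map $\phi$ such that for every $x\in X$, $u\in\mathcal{U}(x)$ and $t\ge0$ the state $\phi(t,x,u)\in X$ is defined, $\phi(0,x,u)=x$, $\phi(t,x,u)=\phi(t,x,\tilde u)$ whenever $\tilde u\in\mathcal{U}(x)$ agrees with $u$ on $[0,t]$, and $u(t+\cdot)\in\mathcal{U}(\phi(t,x,u))$ with $\phi(h,\phi(t,x,u),u(t+\cdot))=\phi(t+h,x,u)$ for all $t,h\ge0$. A positive cone in a normed linear space $X$ is a set $K$ with $K\cap(-K)=\{0\}$, $ax\in K$ and $x+y\in K$ for all $a\ge0$, $x,y\in K$; it induces the order $x\le y\iff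 y-x\in K$. The system is ordered if $X$ and $\mathcal{U}$ carry such orders. It is monotone with respect to inputs if for all $t\ge0$, $x\in X$ and $u_1,u_2\in\mathcal{U}(x)$ with $u_1\le u_2$ one has $\phi(t,x,u_1)\le\phi(t,x,u_2)$. For $\mathcal{U}_c\subseteq\mathcal{U}$, $\Sigma$ is ISS with respect to inputs in $\mathcal{U}_c$ if there exist $\beta\in\mathcal{KL}$, $\gamma\in\mathcal{K}$ such that $\|\phi(t,x,u)\|_X\le\beta(\|x\|_X,t)+\gamma(\|u\|_{\mathcal{U}})$ for all $t\ge0$, all $x\in X$ and all $u\in\mathcal{U}(x)\cap\mathcal{U}_c$; ISS means ISS w.r.t. inputs in $\mathcal{U}$. $\Sigma$ is exp-ISS w.r.t. inputs in $\mathcal{U}_c$ if there exist constants $M,a>0$ and $\gamma\in\mathcal{K}_\infty$ with $\|\phi(t,x,u)\|_X\le Me^{-at}\|x\|_X+\gamma(\|u\|_{\mathcal{U}})$ for the same range of $t,x,u$; exp-ISS means exp-ISS w.r.t. inputs in $\mathcal{U}$; "with a linear gain function" means $\gamma$ can be chosen linear. *)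

theory Defs
  imports "HOL-Analysis.Analysis"
begin

definition class_K :: "(real \<Rightarrow> real) \<Rightarrow> bool" where
  "class_K \<gamma> \<longleftrightarrow> continuous_on {0..} \<gamma> \<and> strict_mono_on {0..} \<gamma> \<and> \<gamma> 0 = 0
      \<and> (\<forall>r\<ge>0. \<gamma> r \<ge> 0)"

definition class_Kinf :: "(real \<Rightarrow> real) \<Rightarrow> bool" where
  "class_Kinf \<gamma> \<longleftrightarrow> class_K \<gamma> \<and> \<not> bdd_above (\<gamma> ` {0..})"

definition class_L :: "(real \<Rightarrow> real) \<Rightarrow> bool" where
  "class_L \<gamma> \<longleftrightarrow> continuous_on {0..} \<gamma> \<and> antimono_on {0..} \<gamma>
      \<and> (\<forall>t\<ge>0. \<gamma> t \<ge> 0) \<and> (\<gamma> \<longlongrightarrow> 0) at_top"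

definition class_KL :: "(real \<Rightarrow> real \<Rightarrow> real) \<Rightarrow> bool" where
  "class_KL \<beta> \<longleftrightarrow> (\<forall>t\<ge>0. class_K (\<lambda>r. \<beta> r t)) \<and> (\<forall>r>0. class_L (\<lambda>t. \<beta> r t))"

text \<open>Inputs are functions R+ -> U, represented as functions real => 'v which are
  normalised to 0 at negative times. Time shift u(. + tau):\<close>

definition shift :: "real \<Rightarrow> (real \<Rightarrow> 'v::zero) \<Rightarrow> real \<Rightarrow> 'v" where
  "shift \<tau> u = (\<lambda>s. if 0 \<le> s then u (s + \<tau>) else 0)"

definition input_space ::
  "'v::real_normed_vector set \<Rightarrow> (real \<Rightarrow> 'v) set \<Rightarrow> ((real \<Rightarrow> 'v) \<Rightarrow> real) \<Rightarrow> bool" where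
  "input_space Uval Ucal normU \<longleftrightarrow>
     Uval \<noteq> {} \<and>
     (\<forall>u\<in>Ucal. (\<forall>t\<ge>0. u t \<in> Uval) \<and> (\<forall>t<0. u t = 0)) \<and>
     (\<lambda>t. 0) \<in> Ucal \<and>
     (\<forall>u\<in>Ucal. \<forall>v\<in>Ucal. (\<lambda>t. u t + v t) \<in> Ucal) \<and>
     (\<forall>u\<in>Ucal. \<forall>a::real. (\<lambda>t. a *\<^sub>R u t) \<in> Ucal) \<and>
     (\<forall>u\<in>Ucal. normU u \<ge> 0 \<and> (normU u = 0 \<longleftrightarrow> u = (\<lambda>t. 0))) \<and>
     (\<forall>u\<in>Ucal. \<forall>a::real. normU (\<lambda>t. a *\<^sub>R u t) = \<bar>a\<bar> * normU u) \<and>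
     (\<forall>u\<in>Ucal. \<forall>v\<in>Ucal. normU (\<lambda>t. u t + v t) \<le> normU u + normU v) \<and>
     (\<forall>u\<in>Ucal. \<forall>\<tau>\<ge>0. shift \<tau> u \<in> Ucal)"

definition control_system ::
  "'v::real_normed_vector set \<Rightarrow> (real \<Rightarrow> 'v) set \<Rightarrow> ((real \<Rightarrow> 'v) \<Rightarrow> real)
   \<Rightarrow> ('x::real_normed_vector \<Rightarrow> (real \<Rightarrow> 'v) set)
   \<Rightarrow> (real \<Rightarrow> 'x \<Rightarrow> (real \<Rightarrow> 'v) \<Rightarrow> 'x) \<Rightarrow> bool" where
  "control_system Uval Ucal normU Uadm \<phi> \<longleftrightarrow>
     input_space Uval Ucal normU \<and>
     (\<forall>x. Uadm x \<noteq> {} \<and> Uadm x \<subseteq> Ucal) \<and>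
     (\<forall>x. \<forall>u\<in>Uadm x. \<phi> 0 x u = x) \<and>
     (\<forall>x. \<forall>u\<in>Uadm x. \<forall>v\<in>Uadm x. \<forall>t\<ge>0.
        (\<forall>s\<in>{0..t}. u s = v s) \<longrightarrow> \<phi> t x u = \<phi> t x v) \<and>
     (\<forall>x. \<forall>u\<in>Uadm x. \<forall>t\<ge>0. shift t u \<in> Uadm (\<phi> t x u) \<and>
        (\<forall>h\<ge>0. \<phi> h (\<phi> t x u) (shift t u) = \<phi> (t + h) x u))"

definition pos_cone :: "'a::real_vector set \<Rightarrow> bool" where
  "pos_cone K \<longleftrightarrow> K \<inter> uminus ` K = {0} \<and>
     (\<forall>a\<ge>0. \<forall>x\<in>K. a *\<^sub>R x \<in> K) \<and> (\<forall>x\<in>K. \<forall>y\<in>K. x + y \<in> K)"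

definition leK :: "'a::real_vector set \<Rightarrow> 'a \<Rightarrow> 'a \<Rightarrow> bool" where
  "leK K x y \<longleftrightarrow> y - x \<in> K"

definition input_cone :: "(real \<Rightarrow> 'v::real_vector) set \<Rightarrow> (real \<Rightarrow> 'v) set \<Rightarrow> bool" where
  "input_cone Ucal K \<longleftrightarrow> K \<subseteq> Ucal \<and>
     K \<inter> (\<lambda>u t. - u t) ` K = {\<lambda>t. 0} \<and>
     (\<forall>a\<ge>0. \<forall>u\<in>K. (\<lambda>t. a *\<^sub>R u t) \<in> K) \<and> (\<forall>u\<in>K. \<forall>v\<in>K. (\<lambda>t. u t + v t) \<in> K)"

definition leU :: "(real \<Rightarrow> 'v::real_vector) set \<Rightarrow> (real \<Rightarrow> 'v) \<Rightarrow> (real \<Rightarrow> 'v) \<Rightarrow> bool" where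
  "leU K u v \<longleftrightarrow> (\<lambda>t. v t - u t) \<in> K"

definition monotone_inputs where
  "monotone_inputs KX KU Uadm \<phi> \<longleftrightarrow>
     (\<forall>t\<ge>0. \<forall>x. \<forall>u1\<in>Uadm x. \<forall>u2\<in>Uadm x. leU KU u1 u2 \<longrightarrow> leK KX (\<phi> t x u1) (\<phi> t x u2))"

definition ISS_wrt ::
  "((real \<Rightarrow> 'v) \<Rightarrow> real) \<Rightarrow> ('x::real_normed_vector \<Rightarrow> (real \<Rightarrow> 'v) set)
   \<Rightarrow> (real \<Rightarrow> 'x \<Rightarrow> (real \<Rightarrow> 'v) \<Rightarrow> 'x) \<Rightarrow> (real \<Rightarrow> 'v) set \<Rightarrow> bool" where
  "ISS_wrt normU Uadm \<phi> Uc \<longleftrightarrow> (\<exists>\<beta> \<gamma>. class_KL \<beta> \<and> class_K \<gamma> \<and>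
     (\<forall>t\<ge>0. \<forall>x. \<forall>u\<in>Uadm x \<inter> Uc. norm (\<phi> t x u) \<le> \<beta> (norm x) t + \<gamma> (normU u)))"

definition expISS_wrt ::
  "((real \<Rightarrow> 'v) \<Rightarrow> real) \<Rightarrow> ('x::real_normed_vector \<Rightarrow> (real \<Rightarrow> 'v) set)
   \<Rightarrow> (real \<Rightarrow> 'x \<Rightarrow> (real \<Rightarrow> 'v) \<Rightarrow> 'x) \<Rightarrow> (real \<Rightarrow> 'v) set \<Rightarrow> bool" where
  "expISS_wrt normU Uadm \<phi> Uc \<longleftrightarrow> (\<exists>M a \<gamma>. M > 0 \<and> a > 0 \<and> class_Kinf \<gamma> \<and>
     (\<forall>t\<ge>0. \<forall>x. \<forall>u\<in>Uadm x \<inter> Uc.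
        norm (\<phi> t x u) \<le> M * exp (- a * t) * norm x + \<gamma> (normU u)))"

text \<open>exp-ISS with a linear gain function gamma(r) = g * r (gamma in K-infinity forces g > 0).\<close>

definition expISS_lin_wrt ::
  "((real \<Rightarrow> 'v) \<Rightarrow> real) \<Rightarrow> ('x::real_normed_vector \<Rightarrow> (real \<Rightarrow> 'v) set)
   \<Rightarrow> (real \<Rightarrow> 'x \<Rightarrow> (real \<Rightarrow> 'v) \<Rightarrow> 'x) \<Rightarrow> (real \<Rightarrow> 'v) set \<Rightarrow> bool" where
  "expISS_lin_wrt normU Uadm \<phi> Uc \<longleftrightarrow> (\<exists>M a g. M > 0 \<and> a > 0 \<and> g > 0 \<and>
     (\<forall>t\<ge>0. \<forall>x. \<forall>u\<in>Uadm x \<inter> Uc.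
        norm (\<phi> t x u) \<le> M * exp (- a * t) * norm x + g * normU u))"

definition linear_on_Rplus :: "(real \<Rightarrow> real) \<Rightarrow> bool" where
  "linear_on_Rplus f \<longleftrightarrow> (\<exists>c. \<forall>r\<ge>0. f r = c * r)"

end

theory Submission
  imports Defs
begin

text \<open>Sandwich every input \<open>u\<close> between \<open>u\<^sub>- \<le> u \<le> u\<^sub>+\<close> from \<open>U\<^sub>c\<close> with
  \<open>\<parallel>u\<^sub>\<pm>\<parallel> \<le> \<eta>(\<parallel>u\<parallel>)\<close>. Monotonicity with respect to inputs sandwiches the trajectory,
  \<open>\<phi>(t,x,u\<^sub>-) \<le> \<phi>(t,x,u) \<le> \<phi>(t,x,u\<^sub>+)\<close>, so by (i)
  \<open>\<parallel>\<phi>(t,x,u)\<parallel> \<le> \<rho>(\<parallel>\<phi>(t,x,u\<^sub>-)\<parallel> + \<parallel>\<phi>(t,x,u\<^sub>+)\<parallel>)\<close>, and both trajectories on the right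
  obey the estimate assumed for inputs in \<open>U\<^sub>c\<close>. Composing the gains with \<open>\<rho>\<close> and \<open>\<eta>\<close>
  gives the estimate for all inputs; linearity of \<open>\<rho>\<close> (and \<open>\<eta>\<close>) preserves the
  exponential (and linear) shape of the bound.\<close>

lemma class_K_mono_on: "class_K f \<Longrightarrow> mono_on {0..} f"
  unfolding class_K_def by (blast intro: strict_mono_on_imp_mono_on)

lemma class_K_mono: "class_K f \<Longrightarrow> 0 \<le> a \<Longrightarrow> a \<le> b \<Longrightarrow> f a \<le> f b"
  using class_K_mono_on by (fastforce intro: mono_onD)

lemma class_K_nonneg: "class_K f \<Longrightarrow> 0 \<le> a \<Longrightarrow> 0 \<le> f a"
  unfolding class_K_def by blast

lemma class_K_add_le:
  assumes f: "class_K f" and "0 \<le> a" "0 \<le> b"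
  shows "f (a + b) \<le> f (2 * a) + f (2 * b)"
proof (cases "a \<le> b")
  case True
  then have "f (a + b) \<le> f (2 * b)" using class_K_mono[OF f] assms by auto
  then show ?thesis using class_K_nonneg[OF f, of "2 * a"] assms by linarith
next
  case False
  then have "f (a + b) \<le> f (2 * a)" using class_K_mono[OF f] assms by auto
  then show ?thesis using class_K_nonneg[OF f, of "2 * b"] assms by linarith
qed

lemma class_K_linear: "c > 0 \<Longrightarrow> class_K (\<lambda>r. c * r)"
  unfolding class_K_def strict_mono_on_def by (auto intro!: continuous_intros)

lemma class_K_linear_slope_pos:
  assumes f: "class_K f" and c: "\<forall>r\<ge>0. f r = c * r"
  shows "c > 0"
proof -
  have "strict_mono_on {0..} f" using f unfolding class_K_def by blast
  then have "f 0 < f 1" by (rule strict_mono_onD) auto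
  then show ?thesis using c by simp
qed

lemma class_K_comp:
  assumes f: "class_K f" and g: "class_K g"
  shows "class_K (\<lambda>r. f (g r))"
proof -
  have "g ` {0..} \<subseteq> {0..}" "continuous_on {0..} f" "continuous_on {0..} g"
    using f g unfolding class_K_def by auto
  then have "continuous_on {0..} (\<lambda>r. f (g r))"
    using continuous_on_compose2[of "{0..}" f "{0..}" g] by blast
  moreover have "strict_mono_on {0..} (\<lambda>r. f (g r))"
    using f g unfolding class_K_def strict_mono_on_def by auto
  ultimately show ?thesis using f g unfolding class_K_def by auto
qed

lemma class_K_cmult: "c > 0 \<Longrightarrow> class_K f \<Longrightarrow> class_K (\<lambda>r. c * f r)"
  using class_K_comp[OF class_K_linear[of c], of f] by simp

lemma class_Kinf_unbounded:
  assumes "class_Kinf f" shows "\<exists>r\<ge>0. f r > B"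
proof (rule ccontr)
  assume "\<not> ?thesis"
  then have "\<forall>y\<in>f ` {0..}. y \<le> B" by auto
  then show False using assms unfolding class_Kinf_def bdd_above_def by auto
qed

lemma class_KinfI: "class_K f \<Longrightarrow> (\<And>B. \<exists>r\<ge>0. f r > B) \<Longrightarrow> class_Kinf f"
  unfolding class_Kinf_def bdd_above_def by (metis atLeast_iff image_eqI not_le)

lemma class_Kinf_comp:
  assumes f: "class_Kinf f" and g: "class_Kinf g"
  shows "class_Kinf (\<lambda>r. f (g r))"
proof (rule class_KinfI)
  have fK: "class_K f" and gK: "class_K g" using f g unfolding class_Kinf_def by auto
  then show "class_K (\<lambda>r. f (g r))" by (rule class_K_comp)
  fix B
  obtain s where s: "s \<ge> 0" "f s > B" using class_Kinf_unbounded[OF f] by blast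
  obtain r where r: "r \<ge> 0" "g r > s" using class_Kinf_unbounded[OF g] by blast
  have "f s \<le> f (g r)" using class_K_mono[OF fK] s r by auto
  then show "\<exists>r\<ge>0. f (g r) > B" using r s by (intro exI[of _ r]) auto
qed

lemma class_Kinf_cmult:
  assumes c: "c > 0" and f: "class_Kinf f"
  shows "class_Kinf (\<lambda>r. c * f r)"
proof (rule class_KinfI)
  show "class_K (\<lambda>r. c * f r)" using class_K_cmult[OF c] f unfolding class_Kinf_def by auto
  fix B
  obtain r where "r \<ge> 0" "f r > B / c" using class_Kinf_unbounded[OF f] by blast
  then show "\<exists>r\<ge>0. c * f r > B" using c by (intro exI[of _ r]) (auto simp: field_simps)
qed

lemma class_L_comp:
  assumes f: "class_K f" and L: "class_L g"
  shows "class_L (\<lambda>t. f (g t))"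
proof -
  have fc: "continuous_on {0..} f" and f0: "f 0 = 0" using f unfolding class_K_def by auto
  have gi: "g ` {0..} \<subseteq> {0..}" and gc: "continuous_on {0..} g" and lim: "(g \<longlongrightarrow> 0) at_top"
    using L unfolding class_L_def by auto
  have "continuous_on {0..} (\<lambda>t. f (g t))"
    using continuous_on_compose2[OF fc gc gi] .
  moreover have "antimono_on {0..} (\<lambda>t. f (g t))"
    using L unfolding class_L_def monotone_on_def by (auto intro!: class_K_mono[OF f])
  moreover have "\<forall>t\<ge>0. f (g t) \<ge> 0" using gi class_K_nonneg[OF f] by auto
  moreover have "\<forall>\<^sub>F t in at_top. g t \<in> {0..}"
    using gi unfolding eventually_at_top_linorder by auto
  then have "((\<lambda>t. f (g t)) \<longlongrightarrow> 0) at_top"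
    using continuous_on_tendsto_compose[OF fc lim] f0 by simp
  ultimately show ?thesis unfolding class_L_def by blast
qed

lemma class_KL_comp: "class_K f \<Longrightarrow> class_KL \<beta> \<Longrightarrow> class_KL (\<lambda>r t. f (\<beta> r t))"
  unfolding class_KL_def using class_K_comp class_L_comp by blast

lemma ISS_wrt_antimono: "Uc \<subseteq> U \<Longrightarrow> ISS_wrt normU Uadm \<phi> U \<Longrightarrow> ISS_wrt normU Uadm \<phi> Uc"
  unfolding ISS_wrt_def by blast

lemma expISS_wrt_antimono:
  "Uc \<subseteq> U \<Longrightarrow> expISS_wrt normU Uadm \<phi> U \<Longrightarrow> expISS_wrt normU Uadm \<phi> Uc"
  unfolding expISS_wrt_def by blast

locale sandwich_system =
  fixes normU :: "(real \<Rightarrow> 'v::real_normed_vector) \<Rightarrow> real"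
    and Uadm :: "'x::real_normed_vector \<Rightarrow> (real \<Rightarrow> 'v) set"
    and \<phi> :: "real \<Rightarrow> 'x \<Rightarrow> (real \<Rightarrow> 'v) \<Rightarrow> 'x"
    and KX :: "'x set" and KU Ucal Uc :: "(real \<Rightarrow> 'v) set"
    and \<rho> \<eta> :: "real \<Rightarrow> real"
  assumes mono: "monotone_inputs KX KU Uadm \<phi>"
    and adm: "\<And>x. Uadm x = Ucal"
    and Uc_subset: "Uc \<subseteq> Ucal"
    and normU_nonneg: "\<And>u. u \<in> Ucal \<Longrightarrow> 0 \<le> normU u"
    and rho: "class_K \<rho>"
    and eta_Kinf: "class_Kinf \<eta>"
    and state_sandwich: "\<And>xm x xp. leK KX xm x \<Longrightarrow> leK KX x xp \<Longrightarrow> norm x \<le> \<rho> (norm xm + norm xp)"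
    and input_sandwich: "\<And>u. u \<in> Ucal \<Longrightarrow> \<exists>um\<in>Uc. \<exists>up\<in>Uc. leU KU um u \<and> leU KU u up \<and>
                           normU um \<le> \<eta> (normU u) \<and> normU up \<le> \<eta> (normU u)"
begin

lemma eta: "class_K \<eta>"
  using eta_Kinf unfolding class_Kinf_def by blast

lemma Uadm_Int_Uc [simp]: "Uadm x \<inter> Uc = Uc"
  using Uc_subset by (simp add: adm inf.absorb2)

lemma trajectory_sandwich:
  assumes t: "t \<ge> 0" and u: "u \<in> Ucal"
  obtains um up where "um \<in> Uc" "up \<in> Uc" "normU um \<le> \<eta> (normU u)" "normU up \<le> \<eta> (normU u)"
    "norm (\<phi> t x u) \<le> \<rho> (norm (\<phi> t x um) + norm (\<phi> t x up))"
proof -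
  obtain um up where um: "um \<in> Uc" and up: "up \<in> Uc" and ord: "leU KU um u" "leU KU u up"
    and norms: "normU um \<le> \<eta> (normU u)" "normU up \<le> \<eta> (normU u)"
    using input_sandwich[OF u] by blast
  have "um \<in> Ucal" "up \<in> Ucal" using um up Uc_subset by auto
  then have "leK KX (\<phi> t x um) (\<phi> t x u)" "leK KX (\<phi> t x u) (\<phi> t x up)"
    using mono t u ord unfolding monotone_inputs_def adm by blast+
  then show thesis using that um up norms state_sandwich by blast
qed

lemma estimate_transfer:
  assumes G: "mono_on {0..} G"
    and est: "\<And>t x u. t \<ge> 0 \<Longrightarrow> u \<in> Uc \<Longrightarrow> norm (\<phi> t x u) \<le> b x t + G (normU u)"
    and t: "t \<ge> 0" and u: "u \<in> Ucal"
  shows "norm (\<phi> t x u) \<le> \<rho> (2 * b x t + 2 * G (\<eta> (normU u)))"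
proof -
  obtain um up where um: "um \<in> Uc" and up: "up \<in> Uc"
    and norms: "normU um \<le> \<eta> (normU u)" "normU up \<le> \<eta> (normU u)"
    and sandwich: "norm (\<phi> t x u) \<le> \<rho> (norm (\<phi> t x um) + norm (\<phi> t x up))"
    using trajectory_sandwich[OF t u] .
  have "\<eta> (normU u) \<ge> 0" using class_K_nonneg[OF eta] normU_nonneg[OF u] .
  then have "G (normU um) \<le> G (\<eta> (normU u))" "G (normU up) \<le> G (\<eta> (normU u))"
    using um up norms Uc_subset normU_nonneg by (auto intro!: mono_onD[OF G])
  then have "norm (\<phi> t x um) + norm (\<phi> t x up) \<le> 2 * b x t + 2 * G (\<eta> (normU u))"
    using est[OF t um, of x] est[OF t up, of x] by linarith
  then show ?thesis
    using sandwich class_K_mono[OF rho, of "norm (\<phi> t x um) + norm (\<phi> t x up)"] by force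
qed

lemma ISS_transfer:
  assumes "ISS_wrt normU Uadm \<phi> Uc"
  shows "ISS_wrt normU Uadm \<phi> Ucal"
proof -
  obtain \<beta> \<gamma> where \<beta>: "class_KL \<beta>" and \<gamma>: "class_K \<gamma>"
    and est: "\<forall>t\<ge>0. \<forall>x. \<forall>u\<in>Uadm x \<inter> Uc. norm (\<phi> t x u) \<le> \<beta> (norm x) t + \<gamma> (normU u)"
    using assms unfolding ISS_wrt_def by blast
  have bound: "norm (\<phi> t x u) \<le> \<rho> (4 * \<beta> (norm x) t) + \<rho> (4 * \<gamma> (\<eta> (normU u)))"
    if t: "t \<ge> 0" and u: "u \<in> Ucal" for t x u
  proof -
    have "class_K (\<lambda>r. \<beta> r t)" using \<beta> t unfolding class_KL_def by blast
    then have "0 \<le> \<beta> (norm x) t" using class_K_nonneg by fastforce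
    moreover have "0 \<le> \<gamma> (\<eta> (normU u))"
      using class_K_nonneg[OF \<gamma>] class_K_nonneg[OF eta] normU_nonneg[OF u] by auto
    ultimately have "\<rho> (2 * \<beta> (norm x) t + 2 * \<gamma> (\<eta> (normU u)))
        \<le> \<rho> (4 * \<beta> (norm x) t) + \<rho> (4 * \<gamma> (\<eta> (normU u)))"
      using class_K_add_le[OF rho, of "2 * \<beta> (norm x) t" "2 * \<gamma> (\<eta> (normU u))"] by simp
    moreover have "norm (\<phi> t x u) \<le> \<rho> (2 * \<beta> (norm x) t + 2 * \<gamma> (\<eta> (normU u)))"
      using estimate_transfer[OF class_K_mono_on[OF \<gamma>] _ t u, where b = "\<lambda>x t. \<beta> (norm x) t"] est
      by simp
    ultimately show ?thesis by linarith
  qed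
  have \<rho>4: "class_K (\<lambda>s. \<rho> (4 * s))" using class_K_comp[OF rho class_K_linear[of 4]] by simp
  have "class_KL (\<lambda>r t. \<rho> (4 * \<beta> r t))" using class_KL_comp[OF \<rho>4 \<beta>] .
  moreover have "class_K (\<lambda>s. \<rho> (4 * \<gamma> (\<eta> s)))"
    using class_K_comp[OF \<rho>4 class_K_comp[OF \<gamma> eta]] .
  ultimately show ?thesis unfolding ISS_wrt_def adm Int_absorb using bound by blast
qed

lemma expISS_estimate_transfer:
  assumes \<rho>: "\<forall>r\<ge>0. \<rho> r = c * r" and M: "M \<ge> 0"
    and G: "mono_on {0..} G" "\<And>s. 0 \<le> s \<Longrightarrow> 0 \<le> G s"
    and est: "\<And>t x u. t \<ge> 0 \<Longrightarrow> u \<in> Uc \<Longrightarrow>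
                norm (\<phi> t x u) \<le> M * exp (- a * t) * norm x + G (normU u)"
    and t: "t \<ge> 0" and u: "u \<in> Ucal"
  shows "norm (\<phi> t x u) \<le> (2 * c * M) * exp (- a * t) * norm x + 2 * c * G (\<eta> (normU u))"
proof -
  have "0 \<le> 2 * (M * exp (- a * t) * norm x) + 2 * G (\<eta> (normU u))"
    using M G(2) class_K_nonneg[OF eta] normU_nonneg[OF u] by auto
  moreover have "norm (\<phi> t x u) \<le> \<rho> (2 * (M * exp (- a * t) * norm x) + 2 * G (\<eta> (normU u)))"
    using estimate_transfer[OF G(1) est t u] .
  ultimately have "norm (\<phi> t x u) \<le> c * (2 * (M * exp (- a * t) * norm x) + 2 * G (\<eta> (normU u)))"
    using \<rho> by metis
  then show ?thesis by (simp only: distrib_left mult.assoc)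
qed

lemma expISS_transfer:
  assumes lin: "linear_on_Rplus \<rho>" and exp_Uc: "expISS_wrt normU Uadm \<phi> Uc"
  shows "expISS_wrt normU Uadm \<phi> Ucal"
proof -
  obtain c where c: "\<forall>r\<ge>0. \<rho> r = c * r" using lin unfolding linear_on_Rplus_def by blast
  have c_pos: "c > 0" using class_K_linear_slope_pos[OF rho c] .
  obtain M a \<gamma> where M: "M > 0" and a: "a > 0" and \<gamma>: "class_Kinf \<gamma>"
    and est: "\<forall>t\<ge>0. \<forall>x. \<forall>u\<in>Uadm x \<inter> Uc. norm (\<phi> t x u) \<le> M * exp (- a * t) * norm x + \<gamma> (normU u)"
    using exp_Uc unfolding expISS_wrt_def by blast
  have \<gamma>K: "class_K \<gamma>" using \<gamma> unfolding class_Kinf_def by blast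
  have est_Uc: "norm (\<phi> t x u) \<le> M * exp (- a * t) * norm x + \<gamma> (normU u)"
    if "t \<ge> 0" "u \<in> Uc" for t x u
    using est that by simp
  have "norm (\<phi> t x u) \<le> (2 * c * M) * exp (- a * t) * norm x + 2 * c * \<gamma> (\<eta> (normU u))"
    if "t \<ge> 0" "u \<in> Ucal" for t x u
    using expISS_estimate_transfer[OF c less_imp_le[OF M] class_K_mono_on[OF \<gamma>K]
        class_K_nonneg[OF \<gamma>K] est_Uc that] .
  moreover have "class_Kinf (\<lambda>s. 2 * c * \<gamma> (\<eta> s))"
    using class_Kinf_cmult[OF _ class_Kinf_comp[OF \<gamma> eta_Kinf]] c_pos by simp
  ultimately show ?thesis unfolding expISS_wrt_def using M a c_pos
    by (intro exI[of _ "2 * c * M"] exI[of _ a] exI[of _ "\<lambda>s. 2 * c * \<gamma> (\<eta> s)"]) (auto simp: adm)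
qed

lemma expISS_lin_transfer:
  assumes lin: "linear_on_Rplus \<rho>" "linear_on_Rplus \<eta>"
    and exp_Uc: "expISS_lin_wrt normU Uadm \<phi> Uc"
  shows "expISS_lin_wrt normU Uadm \<phi> Ucal"
proof -
  obtain c e where c: "\<forall>r\<ge>0. \<rho> r = c * r" and e: "\<forall>r\<ge>0. \<eta> r = e * r"
    using lin unfolding linear_on_Rplus_def by blast
  have c_pos: "c > 0" and e_pos: "e > 0"
    using class_K_linear_slope_pos[OF rho c] class_K_linear_slope_pos[OF eta e] .
  obtain M a g where M: "M > 0" and a: "a > 0" and g: "g > 0"
    and est: "\<forall>t\<ge>0. \<forall>x. \<forall>u\<in>Uadm x \<inter> Uc. norm (\<phi> t x u) \<le> M * exp (- a * t) * norm x + g * normU u"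
    using exp_Uc unfolding expISS_lin_wrt_def by blast
  have est_Uc: "norm (\<phi> t x u) \<le> M * exp (- a * t) * norm x + g * normU u"
    if "t \<ge> 0" "u \<in> Uc" for t x u
    using est that by simp
  have g_nonneg: "0 \<le> g * s" if "0 \<le> s" for s using g that by simp
  have "norm (\<phi> t x u) \<le> (2 * c * M) * exp (- a * t) * norm x + (2 * c * g * e) * normU u"
    if "t \<ge> 0" "u \<in> Ucal" for t x u
  proof -
    have "norm (\<phi> t x u) \<le> (2 * c * M) * exp (- a * t) * norm x + 2 * c * (g * \<eta> (normU u))"
      using expISS_estimate_transfer[OF c less_imp_le[OF M] class_K_mono_on[OF class_K_linear[OF g]]
          g_nonneg est_Uc that] .
    then show ?thesis using e normU_nonneg[OF that(2)] by (simp add: algebra_simps)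
  qed
  then show ?thesis unfolding expISS_lin_wrt_def adm Int_absorb using M a g c_pos e_pos
    by (intro exI[of _ "2 * c * M"] exI[of _ a] exI[of _ "2 * c * g * e"]) auto
qed

end

theorem mainTheorem1:
  fixes Uval :: "'v::real_normed_vector set"
    and Ucal Uc KU :: "(real \<Rightarrow> 'v) set"
    and normU :: "(real \<Rightarrow> 'v) \<Rightarrow> real"
    and Uadm :: "'x::real_normed_vector \<Rightarrow> (real \<Rightarrow> 'v) set"
    and \<phi> :: "real \<Rightarrow> 'x \<Rightarrow> (real \<Rightarrow> 'v) \<Rightarrow> 'x"
    and KX :: "'x set"
    and \<rho> \<eta> :: "real \<Rightarrow> real"
  assumes sys: "control_system Uval Ucal normU Uadm \<phi>"
    and coneX: "pos_cone KX"
    and coneU: "input_cone Ucal KU"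
    and mono: "monotone_inputs KX KU Uadm \<phi>"
    and adm: "\<forall>x. Uadm x = Ucal"
    and Uc: "Uc \<subseteq> Ucal"
    and rho: "class_Kinf \<rho>"
    and i: "\<forall>xm x xp. leK KX xm x \<and> leK KX x xp \<longrightarrow> norm x \<le> \<rho> (norm xm + norm xp)"
    and eta: "class_Kinf \<eta>"
    and ii: "\<forall>u\<in>Ucal. \<exists>um\<in>Uc. \<exists>up\<in>Uc. leU KU um u \<and> leU KU u up \<and>
               normU um \<le> \<eta> (normU u) \<and> normU up \<le> \<eta> (normU u)"
  shows "(ISS_wrt normU Uadm \<phi> Ucal \<longleftrightarrow> ISS_wrt normU Uadm \<phi> Uc) \<and>
         (linear_on_Rplus \<rho> \<longrightarrow>
            (expISS_wrt normU Uadm \<phi> Ucal \<longleftrightarrow> expISS_wrt normU Uadm \<phi> Uc) \<and>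
            (expISS_lin_wrt normU Uadm \<phi> Uc \<and> linear_on_Rplus \<eta> \<longrightarrow>
               expISS_lin_wrt normU Uadm \<phi> Ucal))"
proof -
  have "\<forall>u\<in>Ucal. 0 \<le> normU u"
    using sys unfolding control_system_def input_space_def by blast
  moreover have "class_K \<rho>" using rho unfolding class_Kinf_def by blast
  ultimately interpret sandwich_system normU Uadm \<phi> KX KU Ucal Uc \<rho> \<eta>
    using mono adm Uc rho eta i ii by unfold_locales blast+
  show ?thesis
    using ISS_transfer ISS_wrt_antimono[OF Uc] expISS_transfer expISS_wrt_antimono[OF Uc]
      expISS_lin_transfer by blast
qed

end
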